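(* Fix real numbers $\{\Theta_{kj}\}_{k,j\in[K]}$. For $\mathbf{P}\in[0,1]^K$ and $(\boldsymbol{\alpha},\boldsymbol{\gamma})\in[-\pi,\pi)^{2K}$ let $\beta_{kj}=\cos^2(\alpha_j+\Theta_{kj}-\Theta_{jj}-\gamma_k)$ and $R_{sum}(\mathbf{P},\boldsymbol{\alpha},\boldsymbol{\gamma})=\sum_{k=1}^K\ln\!\left(1+\frac{P_k\beta_{kk}}{\sum_{j\ne k}P_j\beta_{kj}+\frac12}\right)$. Let $\mathcal{S}\subset[K]$ with $|\mathcal{S}|=s\ge 1$, and let $(\boldsymbol{\alpha},\boldsymbol{\gamma}),(\boldsymbol{\alpha}',\boldsymbol{\gamma}')\in[-\pi,\pi)^{2K}$ satisfy $\max_{k\in\mathcal{S}}\max(|\alpha_k-\alpha_k'|,|\gamma_k-\gamma_k'|)\le\frac{1}{2s^2}$. Then $$\left|R_{sum}(\mathbf{1}_{\mathcal{S}},\boldsymbol{\alpha},\boldsymbol{\gamma})-R_{sum}(\mathbf{1}_{\mathcal{S}},\boldsymbol{\alpha}',\boldsymbol{\gamma}')\right|\le 4,$$ where $\mathbf{1}_{\mathcal{S}}\in\{0,1\}^K$ has $k$-th component $1$ if $k\in\mathcal{S}$ and $0$ otherwise. *)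

theory Defs
  imports Complex_Main
begin

definition beta :: "(nat \<Rightarrow> nat \<Rightarrow> real) \<Rightarrow> (nat \<Rightarrow> real) \<Rightarrow> (nat \<Rightarrow> real) \<Rightarrow> nat \<Rightarrow> nat \<Rightarrow> real" where
  "beta Theta alpha gamma k j = (cos (alpha j + Theta k j - Theta j j - gamma k))\<^sup>2"

definition R_sum :: "nat \<Rightarrow> (nat \<Rightarrow> nat \<Rightarrow> real) \<Rightarrow> (nat \<Rightarrow> real) \<Rightarrow> (nat \<Rightarrow> real) \<Rightarrow> (nat \<Rightarrow> real) \<Rightarrow> real" where
  "R_sum K Theta P alpha gamma =
     (\<Sum>k\<in>{1..K}. ln (1 + P k * beta Theta alpha gamma k k /
        ((\<Sum>j\<in>{1..K} - {k}. P j * beta Theta alpha gamma k j) + 1/2)))"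

definition indicator_vec :: "nat set \<Rightarrow> nat \<Rightarrow> real" where
  "indicator_vec S k = (if k \<in> S then 1 else 0)"

end

theory Submission
  imports Defs
begin

text \<open>With all powers in \<open>S\<close> equal to one, the sum rate is the sum over \<open>k \<in> S\<close> of
  \<open>ln (total_k + 1/2) - ln (interference_k + 1/2)\<close>, where \<open>total_k\<close> sums \<open>beta k j\<close> over
  \<open>j \<in> S\<close> and \<open>interference_k\<close> over \<open>j \<in> S - {k}\<close>. Since \<open>cos\<^sup>2\<close> is 1-Lipschitz, each
  \<open>beta k j\<close> with \<open>j, k \<in> S\<close> moves by at most \<open>1/s\<^sup>2\<close>, so each of these sums moves by at
  most \<open>1/s\<close>; as \<open>ln\<close> is 2-Lipschitz on \<open>[1/2, \<infinity>)\<close>, each of the \<open>s\<close> summands moves by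
  at most \<open>4/s\<close>.\<close>

lemma abs_cos_squared_diff_le: "\<bar>(cos x)\<^sup>2 - (cos y)\<^sup>2\<bar> \<le> \<bar>x - (y::real)\<bar>"
proof -
  have "(cos x)\<^sup>2 - (cos y)\<^sup>2 = (sin y)\<^sup>2 * (cos x)\<^sup>2 - (cos y)\<^sup>2 * (sin x)\<^sup>2"
    by (simp add: sin_squared_eq algebra_simps)
  also have "\<dots> = sin (y + x) * sin (y - x)"
    using sin_add[of y x] sin_diff[of y x] unfolding power2_eq_square by algebra
  finally have "\<bar>(cos x)\<^sup>2 - (cos y)\<^sup>2\<bar> = \<bar>sin (y + x)\<bar> * \<bar>sin (y - x)\<bar>"
    by (simp add: abs_mult)
  also have "\<dots> \<le> 1 * \<bar>y - x\<bar>"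
    by (rule mult_mono) (auto simp: abs_sin_x_le_abs_x)
  finally show ?thesis by simp
qed

lemma abs_ln_diff_le:
  fixes c x y :: real
  assumes "0 < c" "c \<le> x" "c \<le> y"
  shows "\<bar>ln x - ln y\<bar> \<le> \<bar>x - y\<bar> / c"
proof -
  have one_sided: "ln u - ln v \<le> \<bar>u - v\<bar> / c" if "c \<le> u" "c \<le> v" for u v :: real
  proof -
    have "ln u - ln v = ln (u / v)" using that \<open>0 < c\<close> by (simp add: ln_div)
    also have "\<dots> \<le> u / v - 1" using that \<open>0 < c\<close> by (intro ln_le_minus_one) auto
    also have "\<dots> = (u - v) / v" using that \<open>0 < c\<close> by (simp add: field_simps)
    also have "\<dots> \<le> \<bar>u - v\<bar> / v" using that \<open>0 < c\<close> by (intro divide_right_mono) auto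
    also have "\<dots> \<le> \<bar>u - v\<bar> / c" using that \<open>0 < c\<close> by (intro divide_left_mono) auto
    finally show ?thesis .
  qed
  show ?thesis
    using one_sided[OF assms(2,3)] one_sided[OF assms(3,2)] by (simp add: abs_minus_commute)
qed

lemma abs_sum_diff_le:
  fixes f g :: "'a \<Rightarrow> real"
  assumes "\<And>x. x \<in> A \<Longrightarrow> \<bar>f x - g x\<bar> \<le> e"
  shows "\<bar>sum f A - sum g A\<bar> \<le> real (card A) * e"
proof -
  have "\<bar>sum f A - sum g A\<bar> \<le> (\<Sum>x\<in>A. \<bar>f x - g x\<bar>)"
    by (metis sum_abs sum_subtractf)
  also have "\<dots> \<le> real (card A) * e"
    by (rule sum_bounded_above) (use assms in auto)
  finally show ?thesis .
qed

lemma abs_ln_sum_half_diff_le: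
  fixes b b' :: "'a \<Rightarrow> real"
  assumes "A \<subseteq> S" "finite S"
    and "\<And>j. j \<in> S \<Longrightarrow> 0 \<le> b j \<and> 0 \<le> b' j"
    and "\<And>j. j \<in> S \<Longrightarrow> \<bar>b j - b' j\<bar> \<le> e"
  shows "\<bar>ln (sum b A + 1/2) - ln (sum b' A + 1/2)\<bar> \<le> 2 * real (card S) * e"
proof -
  have e: "0 \<le> e" if "S \<noteq> {}" using that assms(4) by force
  have "0 \<le> sum b A" "0 \<le> sum b' A"
    using assms(1,3) by (auto intro!: sum_nonneg)
  then have "\<bar>ln (sum b A + 1/2) - ln (sum b' A + 1/2)\<bar> \<le> \<bar>sum b A - sum b' A\<bar> / (1/2)"
    using abs_ln_diff_le[of "1/2" "sum b A + 1/2" "sum b' A + 1/2"] by simp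
  also have "\<dots> \<le> 2 * (real (card A) * e)"
    using abs_sum_diff_le[of A b b' e] assms(1,4) by auto
  also have "\<dots> \<le> 2 * (real (card S) * e)"
    using card_mono[OF assms(2,1)] e assms(1) by (cases "S = {}") (auto intro: mult_right_mono)
  finally show ?thesis by simp
qed

lemma abs_rate_term_diff_le:
  fixes b b' :: "'a \<Rightarrow> real"
  assumes "finite S"
    and "\<And>j. j \<in> S \<Longrightarrow> 0 \<le> b j \<and> 0 \<le> b' j"
    and "\<And>j. j \<in> S \<Longrightarrow> \<bar>b j - b' j\<bar> \<le> e"
  shows "\<bar>(ln (sum b S + 1/2) - ln (sum b (S - {k}) + 1/2))
          - (ln (sum b' S + 1/2) - ln (sum b' (S - {k}) + 1/2))\<bar> \<le> 4 * real (card S) * e"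
  using abs_ln_sum_half_diff_le[of S S b b' e] abs_ln_sum_half_diff_le[of "S - {k}" S b b' e] assms
  by (simp add: abs_le_iff)

lemma abs_beta_diff_le:
  "\<bar>beta Theta alpha gamma k j - beta Theta alpha' gamma' k j\<bar>
     \<le> \<bar>alpha j - alpha' j\<bar> + \<bar>gamma k - gamma' k\<bar>"
proof -
  have "\<bar>beta Theta alpha gamma k j - beta Theta alpha' gamma' k j\<bar>
      \<le> \<bar>(alpha j + Theta k j - Theta j j - gamma k) - (alpha' j + Theta k j - Theta j j - gamma' k)\<bar>"
    unfolding beta_def by (rule abs_cos_squared_diff_le)
  then show ?thesis by linarith
qed

lemma R_sum_indicator_vec:
  assumes "S \<subseteq> {1..K}"
  shows "R_sum K Theta (indicator_vec S) alpha gamma =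
    (\<Sum>k\<in>S. ln ((\<Sum>j\<in>S. beta Theta alpha gamma k j) + 1/2)
            - ln ((\<Sum>j\<in>S - {k}. beta Theta alpha gamma k j) + 1/2))"
proof -
  let ?b = "beta Theta alpha gamma"
  have fin: "finite S" using assms finite_subset by blast
  have interference: "(\<Sum>j\<in>{1..K} - {k}. indicator_vec S j * ?b k j) = (\<Sum>j\<in>S - {k}. ?b k j)" for k
    unfolding indicator_vec_def
    by (rule sum.mono_neutral_cong_right) (use assms fin in auto)
  have "R_sum K Theta (indicator_vec S) alpha gamma =
      (\<Sum>k\<in>S. ln (1 + ?b k k / ((\<Sum>j\<in>S - {k}. ?b k j) + 1/2)))"
    unfolding R_sum_def interference
    by (rule sum.mono_neutral_cong_right) (use assms fin in \<open>auto simp: indicator_vec_def\<close>)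
  also have "\<dots> = (\<Sum>k\<in>S. ln ((\<Sum>j\<in>S. ?b k j) + 1/2) - ln ((\<Sum>j\<in>S - {k}. ?b k j) + 1/2))"
  proof (rule sum.cong[OF refl])
    fix k assume k: "k \<in> S"
    have I: "0 \<le> (\<Sum>j\<in>S - {k}. ?b k j)" and b: "0 \<le> ?b k k"
      by (auto intro!: sum_nonneg simp: beta_def)
    have "1 + ?b k k / ((\<Sum>j\<in>S - {k}. ?b k j) + 1/2)
        = ((\<Sum>j\<in>S. ?b k j) + 1/2) / ((\<Sum>j\<in>S - {k}. ?b k j) + 1/2)"
      using I by (simp add: sum.remove[OF fin k] field_simps)
    then show "ln (1 + ?b k k / ((\<Sum>j\<in>S - {k}. ?b k j) + 1/2))
        = ln ((\<Sum>j\<in>S. ?b k j) + 1/2) - ln ((\<Sum>j\<in>S - {k}. ?b k j) + 1/2)"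
      using I b by (simp add: ln_div sum.remove[OF fin k])
  qed
  finally show ?thesis .
qed

theorem lemma4:
  fixes K :: nat and Theta :: "nat \<Rightarrow> nat \<Rightarrow> real"
    and S :: "nat set" and alpha gamma alpha' gamma' :: "nat \<Rightarrow> real"
  assumes "S \<subseteq> {1..K}" and "card S \<ge> 1"
    and "\<forall>k\<in>{1..K}. -pi \<le> alpha k \<and> alpha k < pi \<and> -pi \<le> gamma k \<and> gamma k < pi"
    and "\<forall>k\<in>{1..K}. -pi \<le> alpha' k \<and> alpha' k < pi \<and> -pi \<le> gamma' k \<and> gamma' k < pi"
    and "\<forall>k\<in>S. max \<bar>alpha k - alpha' k\<bar> \<bar>gamma k - gamma' k\<bar> \<le> 1 / (2 * (real (card S))\<^sup>2)"
  shows "\<bar>R_sum K Theta (indicator_vec S) alpha gamma - R_sum K Theta (indicator_vec S) alpha' gamma'\<bar> \<le> 4"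
proof -
  define s where "s = real (card S)"
  have fin: "finite S" using assms(1) finite_subset by blast
  have "s \<ge> 1" using assms(2) by (simp add: s_def)
  let ?T = "\<lambda>a g k. ln ((\<Sum>j\<in>S. beta Theta a g k j) + 1/2)
                   - ln ((\<Sum>j\<in>S - {k}. beta Theta a g k j) + 1/2)"
  have beta_close: "\<bar>beta Theta alpha gamma k j - beta Theta alpha' gamma' k j\<bar> \<le> 1 / s\<^sup>2"
    if "k \<in> S" "j \<in> S" for k j
  proof -
    have "\<bar>alpha j - alpha' j\<bar> \<le> 1 / (2 * s\<^sup>2)" "\<bar>gamma k - gamma' k\<bar> \<le> 1 / (2 * s\<^sup>2)"
      using assms(5) that unfolding s_def by fastforce+
    then show ?thesis
      using abs_beta_diff_le[of Theta alpha gamma k j alpha' gamma'] by simp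
  qed
  have term_close: "\<bar>?T alpha gamma k - ?T alpha' gamma' k\<bar> \<le> 4 / s" if "k \<in> S" for k
  proof -
    have "\<bar>?T alpha gamma k - ?T alpha' gamma' k\<bar> \<le> 4 * s * (1 / s\<^sup>2)"
      unfolding s_def
      by (rule abs_rate_term_diff_le[OF fin])
        (simp add: beta_def, use beta_close[OF that] in \<open>simp add: s_def\<close>)
    also have "\<dots> = 4 / s" using \<open>s \<ge> 1\<close> by (simp add: power2_eq_square)
    finally show ?thesis .
  qed
  have "\<bar>R_sum K Theta (indicator_vec S) alpha gamma - R_sum K Theta (indicator_vec S) alpha' gamma'\<bar>
      = \<bar>(\<Sum>k\<in>S. ?T alpha gamma k) - (\<Sum>k\<in>S. ?T alpha' gamma' k)\<bar>"
    unfolding R_sum_indicator_vec[OF assms(1)] ..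
  also have "\<dots> \<le> s * (4 / s)"
    unfolding s_def by (rule abs_sum_diff_le) (rule term_close[unfolded s_def])
  also have "\<dots> = 4" using \<open>s \<ge> 1\<close> by simp
  finally show ?thesis .
qed

end
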